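(* In the setting described in the context, suppose $T$ and $A$ are irreducible and $r_A>1$. Then for $1<|z|<r_A$, $\det(I-\Gamma_A^*(z))=0$ if and only if $\det(I-R^*(z))=0$.
   Context: Let $M_0,M$ be positive integers. Consider a discrete-time Markov chain $\{(X_n,S_n)\}_{n\ge0}$ of M/G/1 type with state space $\{(0,j):1\le j\le M_0\}\cup\{(k,j):k\ge1,1\le j\le M\}$ (level $k$ = states with first coordinate $k$), with transition matrix in lexicographic order \[ T=\begin{pmatrix}B(0)&B(1)&B(2)&\cdots\\ C(0)&A(1)&A(2)&\cdots\\ O&A(0)&A(1)&\cdots\\ O&O&A(0)&\cdots\\ \vdots&\vdots&\vdots&\ddots\end{pmatrix}, \] with nonnegative blocks $A(k)$ ($M\times M$), $B(0)$, $B(k)$ ($k\ge1$), $C(0)$ of compatible sizes; $A=\sum_{k\ge0}A(k)$ stochastic, $B(0)e+\sum_{k\ge1}B(k)e=e$. $A^*(z)=\sum_{k\ge0}z^kA(k)$ with convergence radius $r_A$, $\Gamma_A^*(z)=z^{-1}A^*(z)$. $G$ is the $M\times M$ matrix with $[G]_{i,j}=\Pr[S_{a(k)}=j\mid X_0=k+1,S_0=i]$ ($a(k)=\inf\{n\ge1:X_n=k\}$), the minimal nonnegative solution of $X=\sum_k A(k)X^k$. $U(k)=\sum_{m\ge k+1}A(m)G^{m-k-1}$ ($k\ge0$), $R(k)=U(k)(I-U(0))^{-1}$ ($k\ge1$), $R^*(z)=\sum_{k\ge1}z^kR(k)$. *)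

theory Defs
  imports "HOL-Analysis.Analysis"
begin

text \<open>Square matrices of a fixed size M are rendered as real^'m^'m ('m a finite type with
CARD('m) = M); level-0 blocks use a second finite index type 'n with CARD('n) = M0.
Block B(k) (k >= 1) is M0 x M, i.e. real^'m^'n; C(0) is M x M0, i.e. real^'n^'m.\<close>

primrec mpow :: "real^'m^'m \<Rightarrow> nat \<Rightarrow> real^'m^'m" where
  "mpow X 0 = mat 1"
| "mpow X (Suc k) = X ** mpow X k"

definition nonneg_mat :: "real^'a^'b \<Rightarrow> bool" where
  "nonneg_mat X \<longleftrightarrow> (\<forall>i j. 0 \<le> X $ i $ j)"

definition irreducible_mat :: "real^'m^'m \<Rightarrow> bool" where
  "irreducible_mat X \<longleftrightarrow> (\<forall>i j. \<exists>n. mpow X n $ i $ j > 0)"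

text \<open>States of the M/G/1-type chain: Inl i is (0,i); Inr (k,j) with k >= 1 is (k,j).\<close>
definition valid_state :: "'n + nat \<times> 'm \<Rightarrow> bool" where
  "valid_state s = (case s of Inl _ \<Rightarrow> True | Inr (k, _) \<Rightarrow> 1 \<le> k)"

definition Tmat ::
  "(nat \<Rightarrow> real^'m^'m) \<Rightarrow> real^'n^'n \<Rightarrow> (nat \<Rightarrow> real^'m^'n) \<Rightarrow> real^'n^'m
   \<Rightarrow> 'n + nat \<times> 'm \<Rightarrow> 'n + nat \<times> 'm \<Rightarrow> real" where
  "Tmat A B0 B C0 s t =
    (case (s, t) of
      (Inl i, Inl i') \<Rightarrow> B0 $ i $ i'
    | (Inl i, Inr (l, j')) \<Rightarrow> B l $ i $ j'
    | (Inr (k, j), Inl i') \<Rightarrow> (if k = 1 then C0 $ j $ i' else 0)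
    | (Inr (k, j), Inr (l, j')) \<Rightarrow> (if k \<le> l + 1 then A (l + 1 - k) $ j $ j' else 0))"

definition irreducible_T ::
  "(nat \<Rightarrow> real^'m^'m) \<Rightarrow> real^'n^'n \<Rightarrow> (nat \<Rightarrow> real^'m^'n) \<Rightarrow> real^'n^'m \<Rightarrow> bool" where
  "irreducible_T A B0 B C0 \<longleftrightarrow>
    (\<forall>s t. valid_state s \<longrightarrow> valid_state t \<longrightarrow>
       (s, t) \<in> {(u, v). valid_state u \<and> valid_state v \<and> Tmat A B0 B C0 u v > 0}\<^sup>*)"

definition Astar :: "(nat \<Rightarrow> real^'m^'m) \<Rightarrow> complex \<Rightarrow> complex^'m^'m" where
  "Astar A z = (\<chi> i j. \<Sum>k. z ^ k * complex_of_real (A k $ i $ j))"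

definition GammaAstar :: "(nat \<Rightarrow> real^'m^'m) \<Rightarrow> complex \<Rightarrow> complex^'m^'m" where
  "GammaAstar A z = (\<chi> i j. Astar A z $ i $ j / z)"

definition solves_G :: "(nat \<Rightarrow> real^'m^'m) \<Rightarrow> real^'m^'m \<Rightarrow> bool" where
  "solves_G A X \<longleftrightarrow> nonneg_mat X \<and> summable (\<lambda>k. A k ** mpow X k) \<and> X = (\<Sum>k. A k ** mpow X k)"

definition minimal_G :: "(nat \<Rightarrow> real^'m^'m) \<Rightarrow> real^'m^'m \<Rightarrow> bool" where
  "minimal_G A G \<longleftrightarrow> solves_G A G \<and> (\<forall>X. solves_G A X \<longrightarrow> (\<forall>i j. G $ i $ j \<le> X $ i $ j))"

definition Umat :: "(nat \<Rightarrow> real^'m^'m) \<Rightarrow> real^'m^'m \<Rightarrow> nat \<Rightarrow> real^'m^'m" where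
  "Umat A G k = (\<Sum>n. A (n + k + 1) ** mpow G n)"

definition Rmat :: "(nat \<Rightarrow> real^'m^'m) \<Rightarrow> real^'m^'m \<Rightarrow> nat \<Rightarrow> real^'m^'m" where
  "Rmat A G k = Umat A G k ** matrix_inv (mat 1 - Umat A G 0)"

definition Rstar :: "(nat \<Rightarrow> real^'m^'m) \<Rightarrow> real^'m^'m \<Rightarrow> complex \<Rightarrow> complex^'m^'m" where
  "Rstar A G z = (\<chi> i j. \<Sum>k. z ^ (Suc k) * complex_of_real (Rmat A G (Suc k) $ i $ j))"

end

theory Submission
  imports Defs
begin

text \<open>Summing the identities \<open>U(k) = A(k+1) + U(k+1) G\<close> and \<open>G = A(0) + U(0) G\<close>
  against \<open>z^k\<close> gives the factorization
  \<open>I - \<Gamma>\<^sub>A\<^sup>*(z) = (I - R\<^sup>*(z)) (I - U(0)) (I - G/z)\<close> for \<open>1 \<le> |z| < r\<^sub>A\<close>.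
  The last factor is invertible for \<open>|z| > 1\<close> because \<open>G\<close> is substochastic: it is dominated
  by the limit of the increasing iterates of \<open>X \<mapsto> \<Sum>k. A(k) X\<^sup>k\<close> started at \<open>0\<close>.
  The middle factor is invertible by irreducibility of \<open>T\<close>: a maximum principle shows that a
  nonzero fixed vector of \<open>U(0)\<close> would trap the chain started two levels up in a maximal
  coordinate above level \<open>1\<close>, so level \<open>0\<close> could not be reached.\<close>

section \<open>Substochastic matrices\<close>

definition row_sum :: "real^'n^'m \<Rightarrow> 'm \<Rightarrow> real" where
  "row_sum X i = (\<Sum>j\<in>UNIV. X $ i $ j)"

definition substochastic :: "real^'m^'m \<Rightarrow> bool" where
  "substochastic X \<longleftrightarrow> nonneg_mat X \<and> (\<forall>i. row_sum X i \<le> 1)"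

lemma matrix_mult_nth: "(X ** Y) $ i $ j = (\<Sum>l\<in>UNIV. X $ i $ l * Y $ l $ j)"
  by (simp add: matrix_matrix_mult_def)

lemma mat_mult_nth: "(mat c ** X) $ i $ j = c * X $ i $ j"
  by (simp add: matrix_mult_nth mat_def if_distrib if_distribR sum.delta cong: if_cong)

lemma matrix_diff_ldistrib: "(X::'a::ring_1^'n^'m) ** (Y - Z) = X ** Y - X ** Z"
  by (simp add: vec_eq_iff matrix_mult_nth sum_subtractf right_diff_distrib)

lemma matrix_diff_rdistrib: "((X::'a::ring_1^'n^'m) - Y) ** Z = X ** Z - Y ** Z"
  by (simp add: vec_eq_iff matrix_mult_nth sum_subtractf left_diff_distrib)

lemma nonneg_mat_mult:
  fixes X :: "real^'n^'m" and Y :: "real^'p^'n"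
  shows "nonneg_mat X \<Longrightarrow> nonneg_mat Y \<Longrightarrow> nonneg_mat (X ** Y)"
  unfolding nonneg_mat_def matrix_mult_nth by (auto intro!: sum_nonneg)

lemma row_sum_mult: "row_sum (X ** Y) i = (\<Sum>l\<in>UNIV. X $ i $ l * row_sum Y l)"
  unfolding row_sum_def matrix_mult_nth sum_distrib_left by (rule sum.swap)

lemma nth_le_row_sum: "nonneg_mat X \<Longrightarrow> X $ i $ j \<le> row_sum X i"
  unfolding row_sum_def nonneg_mat_def by (intro member_le_sum) auto

lemma substochastic_nth_le_1: "substochastic X \<Longrightarrow> X $ i $ j \<le> 1"
  unfolding substochastic_def by (meson nth_le_row_sum order_trans)

lemma row_sum_mult_substochastic_le:
  assumes "nonneg_mat X" "substochastic Y"
  shows "row_sum (X ** Y) i \<le> row_sum X i"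
proof -
  have "row_sum (X ** Y) i \<le> (\<Sum>l\<in>UNIV. X $ i $ l * 1)"
    unfolding row_sum_mult using assms
    by (intro sum_mono mult_left_mono) (auto simp: substochastic_def nonneg_mat_def)
  then show ?thesis by (simp add: row_sum_def)
qed

lemma substochastic_mult: "substochastic X \<Longrightarrow> substochastic Y \<Longrightarrow> substochastic (X ** Y)"
  using row_sum_mult_substochastic_le nonneg_mat_mult
  unfolding substochastic_def by (meson order_trans)

lemma substochastic_mat_1: "substochastic (mat 1)"
  by (simp add: substochastic_def nonneg_mat_def row_sum_def mat_def sum.delta)

lemma substochastic_0: "substochastic 0"
  by (simp add: substochastic_def nonneg_mat_def row_sum_def)

lemma substochastic_le:
  assumes "nonneg_mat X" "X \<le> Y" "substochastic Y"
  shows "substochastic X"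
proof -
  have "row_sum X i \<le> row_sum Y i" for i
    using assms(2) unfolding row_sum_def by (intro sum_mono) (simp add: less_eq_vec_def)
  with assms show ?thesis unfolding substochastic_def by (meson order_trans)
qed

lemma substochastic_limit:
  assumes "\<And>n. substochastic (X n)" "\<And>i j. (\<lambda>n. X n $ i $ j) \<longlonglongrightarrow> L $ i $ j"
  shows "substochastic L"
proof -
  have "0 \<le> L $ i $ j" for i j
    by (rule LIMSEQ_le_const[OF assms(2)]) (use assms(1) in \<open>auto simp: substochastic_def nonneg_mat_def\<close>)
  moreover have "row_sum L i \<le> 1" for i
    unfolding row_sum_def
    by (rule LIMSEQ_le_const2[OF tendsto_sum[OF assms(2)]])
       (use assms(1) in \<open>auto simp: substochastic_def row_sum_def\<close>)
  ultimately show ?thesis by (simp add: substochastic_def nonneg_mat_def)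
qed

lemma mpow_add: "mpow X (m + n) = mpow X m ** mpow X n"
  by (induction m) (auto simp: matrix_mul_assoc)

lemma mpow_Suc_right: "mpow X (Suc n) = mpow X n ** X"
  using mpow_add[of X n 1] by simp

lemma nonneg_mat_mpow: "nonneg_mat X \<Longrightarrow> nonneg_mat (mpow X n)"
  by (induction n) (use substochastic_mat_1 in \<open>auto simp: substochastic_def nonneg_mat_mult\<close>)

lemma substochastic_mpow: "substochastic X \<Longrightarrow> substochastic (mpow X n)"
  by (induction n) (auto intro: substochastic_mult substochastic_mat_1)

lemma matrix_mult_mono:
  fixes X X' :: "real^'n^'m" and Y Y' :: "real^'p^'n"
  assumes "nonneg_mat X" "nonneg_mat Y" "X \<le> X'" "Y \<le> Y'"
  shows "X ** Y \<le> X' ** Y'"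
  using assms unfolding less_eq_vec_def nonneg_mat_def matrix_mult_nth
  by (auto intro!: sum_mono mult_mono order_trans[OF _ assms(3)[unfolded less_eq_vec_def, rule_format]])

lemma mpow_mono: "nonneg_mat X \<Longrightarrow> X \<le> Y \<Longrightarrow> mpow X n \<le> mpow Y n"
  by (induction n) (auto intro: matrix_mult_mono nonneg_mat_mpow)

lemma tendsto_matrix_mult_nth:
  fixes X :: "nat \<Rightarrow> real^'n^'m" and Y :: "nat \<Rightarrow> real^'p^'n"
  assumes "\<And>i j. (\<lambda>n. X n $ i $ j) \<longlonglongrightarrow> L $ i $ j" "\<And>i j. (\<lambda>n. Y n $ i $ j) \<longlonglongrightarrow> M $ i $ j"
  shows "(\<lambda>n. (X n ** Y n) $ i $ j) \<longlonglongrightarrow> (L ** M) $ i $ j"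
  unfolding matrix_mult_nth by (rule tendsto_sum) (intro tendsto_mult assms)

lemma tendsto_mpow_nth:
  assumes "\<And>i j. (\<lambda>n. X n $ i $ j) \<longlonglongrightarrow> L $ i $ j"
  shows "(\<lambda>n. mpow (X n) k $ i $ j) \<longlonglongrightarrow> mpow L k $ i $ j"
  by (induction k arbitrary: i j) (simp_all add: tendsto_matrix_mult_nth assms)

definition stochastic_row_in :: "'m set \<Rightarrow> real^'m^'m \<Rightarrow> 'm \<Rightarrow> bool" where
  "stochastic_row_in S X c \<longleftrightarrow> row_sum X c = 1 \<and> (\<forall>b. 0 < X $ c $ b \<longrightarrow> b \<in> S)"

lemma stochastic_row_in_mat_1: "stochastic_row_in S (mat 1) c \<longleftrightarrow> c \<in> S"
  by (auto simp: stochastic_row_in_def row_sum_def mat_def sum.delta)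

lemma obtain_max_finite_UNIV:
  fixes f :: "'a::finite \<Rightarrow> 'b::linorder"
  obtains i where "\<And>j. f j \<le> f i"
proof -
  have "Max (range f) \<in> range f" by (rule Max_in) auto
  then obtain i where i: "f i = Max (range f)" by (metis rangeE)
  have "f j \<le> f i" for j unfolding i by (rule Max_ge) auto
  then show ?thesis by (rule that)
qed

lemma stochastic_row_in_max_modulus:
  fixes X :: "real^'m^'m" and v :: "real^'m"
  assumes X: "substochastic X" and v: "X *v v = v"
    and max: "\<And>j. \<bar>v $ j\<bar> \<le> \<bar>v $ i\<bar>" and nz: "v $ i \<noteq> 0"
  shows "stochastic_row_in {j. \<bar>v $ j\<bar> = \<bar>v $ i\<bar>} X i"
proof -
  let ?M = "\<bar>v $ i\<bar>"
  have nn: "0 \<le> X $ i $ l" for l using X by (simp add: substochastic_def nonneg_mat_def)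
  have "?M = \<bar>\<Sum>l\<in>UNIV. X $ i $ l * v $ l\<bar>"
    using arg_cong[OF v, of "\<lambda>w. \<bar>w $ i\<bar>"] by (simp add: matrix_vector_mult_def)
  also have "\<dots> \<le> (\<Sum>l\<in>UNIV. X $ i $ l * \<bar>v $ l\<bar>)"
    by (rule order_trans[OF sum_abs]) (simp add: abs_mult nn)
  finally have lower: "?M \<le> (\<Sum>l\<in>UNIV. X $ i $ l * \<bar>v $ l\<bar>)" .
  have "(\<Sum>l\<in>UNIV. X $ i $ l * \<bar>v $ l\<bar>) \<le> (\<Sum>l\<in>UNIV. X $ i $ l * ?M)"
    by (intro sum_mono mult_left_mono max nn)
  also have "\<dots> = row_sum X i * ?M" by (simp add: row_sum_def sum_distrib_right)
  finally have upper: "(\<Sum>l\<in>UNIV. X $ i $ l * \<bar>v $ l\<bar>) \<le> row_sum X i * ?M" .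
  have "row_sum X i \<le> 1" using X by (simp add: substochastic_def)
  with lower upper nz have rs: "row_sum X i = 1"
    by (smt (verit) mult_le_cancel_right1 zero_less_abs_iff)
  have "(\<Sum>l\<in>UNIV. X $ i $ l * (?M - \<bar>v $ l\<bar>)) = 0"
  proof -
    have "(\<Sum>l\<in>UNIV. X $ i $ l * ?M) = ?M"
      using rs by (simp add: row_sum_def flip: sum_distrib_right)
    then show ?thesis using lower upper rs by (simp add: right_diff_distrib sum_subtractf)
  qed
  then have zero: "X $ i $ j * (?M - \<bar>v $ j\<bar>) = 0" for j
    by (subst (asm) sum_nonneg_eq_0_iff) (auto intro!: mult_nonneg_nonneg nn max)
  have "\<bar>v $ j\<bar> = ?M" if "0 < X $ i $ j" for j
    using zero[of j] that by simp
  with rs show ?thesis by (simp add: stochastic_row_in_def)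
qed

lemma det_mat_1_minus_substochastic_div:
  fixes X :: "real^'m^'m" and z :: complex
  assumes X: "substochastic X" and z: "1 < cmod z"
  shows "det (mat 1 - (\<chi> i j. complex_of_real (X $ i $ j) / z)) \<noteq> 0"
proof -
  let ?Xz = "(\<chi> i j. complex_of_real (X $ i $ j) / z) :: complex^'m^'m"
  have "x = 0" if x: "(mat 1 - ?Xz) *v x = 0" for x
  proof -
    obtain i where max: "\<And>j. cmod (x $ j) \<le> cmod (x $ i)"
      using obtain_max_finite_UNIV[of "\<lambda>j. cmod (x $ j)"] by blast
    let ?M = "cmod (x $ i)"
    have "x = ?Xz *v x"
      using x by (simp add: matrix_vector_mult_diff_rdistrib)
    then have "x $ i = (?Xz *v x) $ i" by (rule arg_cong)
    then have "x $ i = (\<Sum>l\<in>UNIV. complex_of_real (X $ i $ l) * x $ l) / z"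
      by (simp add: matrix_vector_mult_def sum_divide_distrib)
    then have "z * x $ i = (\<Sum>l\<in>UNIV. complex_of_real (X $ i $ l) * x $ l)"
      using z by (auto simp: field_simps)
    then have "cmod z * ?M = cmod (\<Sum>l\<in>UNIV. complex_of_real (X $ i $ l) * x $ l)"
      by (metis norm_mult)
    also have "\<dots> \<le> (\<Sum>l\<in>UNIV. X $ i $ l * cmod (x $ l))"
      by (rule order_trans[OF norm_sum]) (use X in \<open>simp add: norm_mult substochastic_def nonneg_mat_def\<close>)
    also have "\<dots> \<le> (\<Sum>l\<in>UNIV. X $ i $ l * ?M)"
      using X by (intro sum_mono mult_left_mono max) (auto simp: substochastic_def nonneg_mat_def)
    also have "\<dots> = row_sum X i * ?M" by (simp add: row_sum_def sum_distrib_right)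
    also have "\<dots> \<le> ?M"
      using X mult_right_mono[of "row_sum X i" 1 ?M] by (simp add: substochastic_def)
    finally have "cmod z * ?M \<le> ?M" .
    then have "(cmod z - 1) * ?M \<le> 0" by (simp add: algebra_simps)
    with z have "?M \<le> 0" by (simp add: mult_le_0_iff)
    then have "cmod (x $ j) \<le> 0" for j using max[of j] by linarith
    then show "x = 0" by (simp add: vec_eq_iff)
  qed
  then have "invertible (mat 1 - ?Xz)"
    unfolding invertible_left_inverse matrix_left_invertible_ker by blast
  then show ?thesis by (simp add: invertible_det_nz)
qed

section \<open>Matrix series and z-transforms\<close>

definition cmat :: "real^'n^'m \<Rightarrow> complex^'n^'m" where
  "cmat X = (\<chi> i j. complex_of_real (X $ i $ j))"

lemma cmat_nth [simp]: "cmat X $ i $ j = complex_of_real (X $ i $ j)"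
  by (simp add: cmat_def)

lemma cmat_mult: "cmat (X ** Y) = cmat X ** cmat Y"
  by (simp add: vec_eq_iff matrix_mult_nth)

lemma cmat_diff: "cmat (X - Y) = cmat X - cmat Y"
  by (simp add: vec_eq_iff)

lemma cmat_mat_1: "cmat (mat 1) = mat 1"
  by (simp add: vec_eq_iff mat_def)

lemma invertible_cmat:
  fixes X :: "real^'m^'m"
  assumes "invertible X"
  shows "invertible (cmat X)"
proof -
  obtain Y where "Y ** X = mat 1" using assms invertible_left_inverse by blast
  then have "cmat Y ** cmat X = mat 1" by (metis cmat_mult cmat_mat_1)
  then show ?thesis using invertible_left_inverse by blast
qed

lemma matrix_inv_mult_left:
  fixes X :: "'a::field^'m^'m"
  assumes "invertible X"
  shows "matrix_inv X ** X = mat 1"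
  using assms unfolding invertible_def matrix_inv_def by (rule someI2_ex) blast

lemma abs_matrix_nth_le_norm: "\<bar>(X::real^'n^'m) $ i $ j\<bar> \<le> norm X"
  using component_le_norm_cart[of "X $ i" j] Finite_Cartesian_Product.norm_nth_le[where x=X and i=i] by linarith

lemma summable_matrix_nth:
  fixes f :: "nat \<Rightarrow> 'a::real_normed_vector^'n^'m"
  shows "summable f \<Longrightarrow> summable (\<lambda>k. f k $ i $ j)"
  using bounded_linear.summable[OF bounded_linear_compose[OF bounded_linear_vec_nth bounded_linear_vec_nth]]
  by blast

lemma suminf_matrix_nth:
  fixes f :: "nat \<Rightarrow> 'a::real_normed_vector^'n^'m"
  shows "summable f \<Longrightarrow> (\<Sum>k. f k) $ i $ j = (\<Sum>k. f k $ i $ j)"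
  using bounded_linear.suminf[OF bounded_linear_compose[OF bounded_linear_vec_nth bounded_linear_vec_nth]]
  by metis

lemma sums_matrixI:
  fixes f :: "nat \<Rightarrow> 'a::real_normed_vector^'n^'m"
  assumes "\<And>i j. (\<lambda>k. f k $ i $ j) sums (S $ i $ j)"
  shows "f sums S"
  using assms unfolding sums_def by (intro vec_tendstoI) (simp add: sum_component vec_tendstoI)

lemma summable_matrixI:
  fixes f :: "nat \<Rightarrow> 'a::real_normed_vector^'n^'m"
  assumes "\<And>i j. summable (\<lambda>k. f k $ i $ j)"
  shows "summable f" "(\<Sum>k. f k) $ i $ j = (\<Sum>k. f k $ i $ j)"
proof -
  have "f sums (\<chi> i j. \<Sum>k. f k $ i $ j)"
    by (rule sums_matrixI) (simp add: summable_sums assms)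
  then show "summable f" "(\<Sum>k. f k) $ i $ j = (\<Sum>k. f k $ i $ j)"
    by (auto simp: sums_iff)
qed

lemma suminf_matrix_mult_right:
  fixes f :: "nat \<Rightarrow> real^'n^'m"
  assumes "summable f"
  shows "summable (\<lambda>k. f k ** X)" "(\<Sum>k. f k ** X) = (\<Sum>k. f k) ** X"
proof -
  have "(\<lambda>k. f k ** X) sums ((\<Sum>k. f k) ** X)"
    by (rule sums_matrixI, unfold matrix_mult_nth, intro sums_sum sums_mult2)
       (simp add: suminf_matrix_nth[OF assms] summable_sums summable_matrix_nth[OF assms])
  then show "summable (\<lambda>k. f k ** X)" "(\<Sum>k. f k ** X) = (\<Sum>k. f k) ** X"
    by (auto simp: sums_iff)
qed

definition ztrans :: "(nat \<Rightarrow> real^'n^'m) \<Rightarrow> complex \<Rightarrow> complex^'n^'m" where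
  "ztrans F z = (\<chi> i j. \<Sum>k. z ^ k * complex_of_real (F k $ i $ j))"

definition ztrans_summable :: "(nat \<Rightarrow> real^'n^'m) \<Rightarrow> complex \<Rightarrow> bool" where
  "ztrans_summable F z \<longleftrightarrow> (\<forall>i j. summable (\<lambda>k. z ^ k * complex_of_real (F k $ i $ j)))"

lemma ztrans_nth [simp]: "ztrans F z $ i $ j = (\<Sum>k. z ^ k * complex_of_real (F k $ i $ j))"
  by (simp add: ztrans_def)

lemma Astar_eq_ztrans: "Astar A z = ztrans A z"
  by (simp add: Astar_def ztrans_def)

lemma ztrans_diff:
  assumes "ztrans_summable F z" "ztrans_summable H z"
  shows "ztrans (\<lambda>k. F k - H k) z = ztrans F z - ztrans H z"
  using assms unfolding ztrans_summable_def
  by (simp add: vec_eq_iff right_diff_distrib suminf_diff)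

lemma ztrans_mult_right:
  fixes F :: "nat \<Rightarrow> real^'n^'m" and X :: "real^'p^'n"
  assumes "ztrans_summable F z"
  shows "ztrans_summable (\<lambda>k. F k ** X) z" "ztrans (\<lambda>k. F k ** X) z = ztrans F z ** cmat X"
proof -
  have "(\<lambda>k. z ^ k * complex_of_real ((F k ** X) $ i $ j)) sums (ztrans F z ** cmat X) $ i $ j" for i j
  proof -
    have "(\<lambda>k. \<Sum>l\<in>UNIV. z ^ k * complex_of_real (F k $ i $ l) * complex_of_real (X $ l $ j))
        sums (\<Sum>l\<in>UNIV. ztrans F z $ i $ l * cmat X $ l $ j)"
      by (intro sums_sum) (use assms in \<open>auto simp: ztrans_summable_def intro!: sums_mult2 summable_sums\<close>)
    then show ?thesis by (simp add: matrix_mult_nth sum_distrib_left mult.assoc)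
  qed
  then show "ztrans_summable (\<lambda>k. F k ** X) z" "ztrans (\<lambda>k. F k ** X) z = ztrans F z ** cmat X"
    by (auto simp: ztrans_summable_def sums_iff vec_eq_iff)
qed

lemma ztrans_shift:
  assumes "ztrans_summable F z"
  shows "(\<chi> i j. \<Sum>k. z ^ Suc k * complex_of_real (F (Suc k) $ i $ j)) = ztrans F z - cmat (F 0)"
proof -
  have "(\<Sum>k. z ^ Suc k * complex_of_real (F (Suc k) $ i $ j))
      = ztrans F z $ i $ j - complex_of_real (F 0 $ i $ j)" for i j
    using suminf_split_head[of "\<lambda>k. z ^ k * complex_of_real (F k $ i $ j)"] assms
    unfolding ztrans_summable_def by (simp del: power_Suc)
  then show ?thesis by (simp add: vec_eq_iff del: power_Suc)
qed

lemma ztrans_Suc: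
  assumes "ztrans_summable F z" "z \<noteq> 0"
  shows "ztrans_summable (\<lambda>k. F (Suc k)) z"
    "ztrans F z = cmat (F 0) + mat z ** ztrans (\<lambda>k. F (Suc k)) z"
proof -
  show sum: "ztrans_summable (\<lambda>k. F (Suc k)) z"
    using assms summable_Suc_iff[where f="\<lambda>k. z ^ k * complex_of_real (F k $ i $ j)" for i j]
    unfolding ztrans_summable_def by (simp add: mult.assoc summable_cmult_iff)
  have "(\<Sum>k. z ^ Suc k * complex_of_real (F (Suc k) $ i $ j))
      = z * ztrans (\<lambda>k. F (Suc k)) z $ i $ j" for i j
    using suminf_mult[of "\<lambda>k. z ^ k * complex_of_real (F (Suc k) $ i $ j)" z] sum
    unfolding ztrans_summable_def by (simp add: mult.assoc)
  then have "ztrans F z - cmat (F 0) = mat z ** ztrans (\<lambda>k. F (Suc k)) z"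
    unfolding ztrans_shift[OF assms(1), symmetric] by (simp add: vec_eq_iff mat_mult_nth del: power_Suc)
  then show "ztrans F z = cmat (F 0) + mat z ** ztrans (\<lambda>k. F (Suc k)) z"
    by (simp add: algebra_simps)
qed

lemma summable_weighted_tails:
  fixes a :: "nat \<Rightarrow> real"
  assumes a: "\<And>n. 0 \<le> a n" and sum: "summable (\<lambda>n. a n * R ^ n)"
    and r: "0 \<le> r" "r < R" and R: "1 \<le> R"
  shows "summable (\<lambda>k. r ^ k * (\<Sum>n. a (n + k + 1)))"
proof -
  let ?S = "\<Sum>n. a n * R ^ n"
  have "norm (a n) \<le> a n * R ^ n" for n
    using a[of n] one_le_power[OF R, of n] by (simp add: mult_le_cancel_left1)
  then have "summable a"
    by (intro summable_comparison_test'[OF sum])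
  then have tail: "summable (\<lambda>n. a (n + k + 1))" for k
    using summable_ignore_initial_segment[of a "Suc k"] by simp
  have weighted_tail: "summable (\<lambda>n. a (n + k + 1) * R ^ (n + k + 1))" for k
    using summable_ignore_initial_segment[OF sum, of "Suc k"] by simp
  have bound: "r ^ k * (\<Sum>n. a (n + k + 1)) \<le> (r / R) ^ k * ?S" for k
  proof -
    have "r ^ k = (r / R) ^ k * R ^ k"
      using R by (simp add: power_divide)
    moreover have "R ^ k * (\<Sum>n. a (n + k + 1)) = (\<Sum>n. R ^ k * a (n + k + 1))"
      by (rule suminf_mult[OF tail, symmetric])
    ultimately have "r ^ k * (\<Sum>n. a (n + k + 1)) = (r / R) ^ k * (\<Sum>n. R ^ k * a (n + k + 1))"
      by (metis mult.assoc)
    also have "\<dots> \<le> (r / R) ^ k * (\<Sum>n. a (n + k + 1) * R ^ (n + k + 1))"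
    proof (intro mult_left_mono suminf_le)
      fix n
      have "R ^ k \<le> R ^ (n + k + 1)" using R by (intro power_increasing) simp_all
      then show "R ^ k * a (n + k + 1) \<le> a (n + k + 1) * R ^ (n + k + 1)"
        using a[of "n + k + 1"] by (metis mult.commute mult_right_mono)
    qed (use r R tail weighted_tail in \<open>simp_all add: summable_mult\<close>)
    also have "\<dots> \<le> (r / R) ^ k * ?S"
    proof (intro mult_left_mono)
      show "(\<Sum>n. a (n + k + 1) * R ^ (n + k + 1)) \<le> ?S"
        using suminf_split_initial_segment[OF sum, of "Suc k"] a R
        by (simp add: sum_nonneg)
    qed (use r R in simp)
    finally show ?thesis .
  qed
  have geometric: "summable (\<lambda>k. (r / R) ^ k * ?S)"
    using r by (intro summable_mult2 summable_geometric) simp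
  have "norm (r ^ k * (\<Sum>n. a (n + k + 1))) \<le> (r / R) ^ k * ?S" for k
    using bound[of k] r tail[of k] a by (simp add: suminf_nonneg)
  then show ?thesis
    by (rule summable_comparison_test'[OF geometric])
qed

section \<open>Series of matrices with stochastic sum\<close>

locale stochastic_matrix_series =
  fixes A :: "nat \<Rightarrow> real^'m^'m"
  assumes A_nonneg: "\<And>k. nonneg_mat (A k)"
    and A_summable: "summable A"
    and A_stochastic: "\<And>i. (\<Sum>j\<in>UNIV. (\<Sum>k. A k) $ i $ j) = 1"
begin

lemma A_nth_nonneg: "0 \<le> A k $ i $ j"
  using A_nonneg by (simp add: nonneg_mat_def)

lemma summable_row_sum: "summable (\<lambda>k. row_sum (A k) i)"
  unfolding row_sum_def by (intro summable_sum summable_matrix_nth A_summable)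

lemma suminf_row_sum: "(\<Sum>k. row_sum (A k) i) = 1"
  using A_stochastic[of i] unfolding row_sum_def
  by (simp add: suminf_sum summable_matrix_nth suminf_matrix_nth A_summable)

lemma mult_substochastic_nth_bounds:
  assumes "substochastic P"
  shows "0 \<le> (A k ** P) $ i $ j" "(A k ** P) $ i $ j \<le> row_sum (A k) i"
proof -
  show "0 \<le> (A k ** P) $ i $ j"
    using nonneg_mat_mult[OF A_nonneg[of k], of P] assms by (simp add: substochastic_def nonneg_mat_def)
  show "(A k ** P) $ i $ j \<le> row_sum (A k) i"
    unfolding matrix_mult_nth row_sum_def
    by (intro sum_mono mult_right_le_one_le A_nth_nonneg)
       (use assms substochastic_nth_le_1 in \<open>auto simp: substochastic_def nonneg_mat_def\<close>)
qed

context
  fixes P :: "nat \<Rightarrow> real^'m^'m"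
  assumes P: "\<And>k. substochastic (P k)"
begin

lemma summable_mult_substochastic_nth: "summable (\<lambda>k. (A k ** P k) $ i $ j)"
  by (rule summable_comparison_test'[OF summable_row_sum[of i]])
     (use mult_substochastic_nth_bounds[OF P] in auto)

lemma summable_mult_substochastic: "summable (\<lambda>k. A k ** P k)"
  and suminf_mult_substochastic_nth: "(\<Sum>k. A k ** P k) $ i $ j = (\<Sum>k. (A k ** P k) $ i $ j)"
  using summable_matrixI[OF summable_mult_substochastic_nth] by auto

lemma row_sum_suminf_mult_substochastic:
  "row_sum (\<Sum>k. A k ** P k) i = (\<Sum>k. row_sum (A k ** P k) i)"
  unfolding row_sum_def suminf_mult_substochastic_nth
  by (rule suminf_sum[symmetric]) (rule summable_mult_substochastic_nth)

lemma summable_row_sum_mult_substochastic: "summable (\<lambda>k. row_sum (A k ** P k) i)"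
  unfolding row_sum_def by (intro summable_sum summable_mult_substochastic_nth)

lemma substochastic_suminf_mult: "substochastic (\<Sum>k. A k ** P k)"
proof -
  have "nonneg_mat (\<Sum>k. A k ** P k)"
    unfolding nonneg_mat_def suminf_mult_substochastic_nth
    by (auto intro!: suminf_nonneg summable_mult_substochastic_nth mult_substochastic_nth_bounds P)
  moreover have "row_sum (\<Sum>k. A k ** P k) i \<le> 1" for i
    unfolding row_sum_suminf_mult_substochastic suminf_row_sum[of i, symmetric]
    by (intro suminf_le row_sum_mult_substochastic_le A_nonneg P
        summable_row_sum_mult_substochastic summable_row_sum)
  ultimately show ?thesis by (simp add: substochastic_def)
qed

text \<open>The row-sum defects of the \<open>A k ** P k\<close> are nonnegative and add up to \<open>0\<close>.\<close>
lemma stochastic_row_in_propagate: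
  assumes row: "stochastic_row_in S (\<Sum>k. A k ** P k) c" and A: "0 < A m $ c $ c'"
  shows "stochastic_row_in S (P m) c'"
proof -
  let ?d = "\<lambda>k. row_sum (A k) c - row_sum (A k ** P k) c"
  have "summable ?d" by (intro summable_diff summable_row_sum summable_row_sum_mult_substochastic)
  moreover have "suminf ?d = 0"
    using row suminf_diff[OF summable_row_sum summable_row_sum_mult_substochastic]
    by (simp add: stochastic_row_in_def suminf_row_sum row_sum_suminf_mult_substochastic)
  moreover have "0 \<le> ?d k" for k using row_sum_mult_substochastic_le[OF A_nonneg P] by simp
  ultimately have "?d m = 0" using suminf_eq_zero_iff by blast
  moreover have "(\<Sum>l\<in>UNIV. A m $ c $ l * (1 - row_sum (P m) l)) = ?d m"
    by (simp add: row_sum_mult right_diff_distrib sum_subtractf row_sum_def[of "A m"])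
  ultimately have "(\<Sum>l\<in>UNIV. A m $ c $ l * (1 - row_sum (P m) l)) = 0" by simp
  moreover have "0 \<le> A m $ c $ l * (1 - row_sum (P m) l)" for l
    using P[of m] A_nth_nonneg by (simp add: substochastic_def)
  ultimately have "A m $ c $ c' * (1 - row_sum (P m) c') = 0"
    by (simp add: sum_nonneg_eq_0_iff)
  with A have "row_sum (P m) c' = 1" by simp
  moreover have "b \<in> S" if "0 < P m $ c' $ b" for b
  proof -
    have "A m $ c $ c' * P m $ c' $ b \<le> (A m ** P m) $ c $ b"
      unfolding matrix_mult_nth using P[of m] A_nth_nonneg
      by (intro member_le_sum) (auto simp: substochastic_def nonneg_mat_def)
    with A that have "0 < (A m ** P m) $ c $ b"
      by (meson mult_pos_pos order_less_le_trans)
    then have "0 < (\<Sum>k. A k ** P k) $ c $ b"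
      unfolding suminf_mult_substochastic_nth
      by (subst suminf_pos_iff) (auto intro: summable_mult_substochastic_nth
          mult_substochastic_nth_bounds P)
    with row show ?thesis by (simp add: stochastic_row_in_def)
  qed
  ultimately show ?thesis by (simp add: stochastic_row_in_def)
qed

end

definition Astar_at :: "real^'m^'m \<Rightarrow> real^'m^'m" where
  "Astar_at X = (\<Sum>k. A k ** mpow X k)"

lemma substochastic_Astar_at: "substochastic X \<Longrightarrow> substochastic (Astar_at X)"
  unfolding Astar_at_def by (intro substochastic_suminf_mult substochastic_mpow)

lemma Astar_at_nth: "substochastic X \<Longrightarrow> Astar_at X $ i $ j = (\<Sum>k. (A k ** mpow X k) $ i $ j)"
  unfolding Astar_at_def by (intro suminf_mult_substochastic_nth substochastic_mpow)

lemma Astar_at_mono: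
  assumes "substochastic X" "substochastic Y" "X \<le> Y"
  shows "Astar_at X \<le> Astar_at Y"
proof -
  have "(A k ** mpow X k) $ i $ j \<le> (A k ** mpow Y k) $ i $ j" for k i j
    using matrix_mult_mono[OF A_nonneg nonneg_mat_mpow order.refl mpow_mono] assms
    by (simp add: substochastic_def less_eq_vec_def)
  then show ?thesis using assms
    by (auto simp: less_eq_vec_def Astar_at_nth substochastic_mpow
        intro!: suminf_le summable_mult_substochastic_nth)
qed

lemma Astar_at_tendsto:
  assumes X: "\<And>n. substochastic (X n)" and L: "substochastic L"
    and lim: "\<And>i j. (\<lambda>n. X n $ i $ j) \<longlonglongrightarrow> L $ i $ j"
  shows "(\<lambda>n. Astar_at (X n) $ i $ j) \<longlonglongrightarrow> Astar_at L $ i $ j"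
proof -
  have "(\<lambda>n. \<Sum>k. (A k ** mpow (X n) k) $ i $ j) \<longlonglongrightarrow> (\<Sum>k. (A k ** mpow L k) $ i $ j)"
  proof (rule tannerys_theorem[THEN conjunct2, THEN conjunct2])
    show "(\<lambda>n. (A k ** mpow (X n) k) $ i $ j) \<longlonglongrightarrow> (A k ** mpow L k) $ i $ j" for k
      by (intro tendsto_matrix_mult_nth tendsto_const tendsto_mpow_nth lim)
    show "\<forall>\<^sub>F (k, n) in at_top \<times>\<^sub>F sequentially. norm ((A k ** mpow (X n) k) $ i $ j) \<le> row_sum (A k) i"
      using mult_substochastic_nth_bounds[OF substochastic_mpow[OF X]]
      by (intro always_eventually) auto
  qed (use summable_row_sum in auto)
  then show ?thesis by (simp add: Astar_at_nth X L)
qed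

text \<open>The iterates of \<open>Astar_at\<close> from \<open>0\<close> increase to a substochastic fixed point.\<close>
lemma substochastic_solution_exists: "\<exists>X. substochastic X \<and> solves_G A X"
proof -
  define Xs where "Xs n = (Astar_at ^^ n) 0" for n
  have sub: "substochastic (Xs n)" for n
    by (induction n) (simp_all add: Xs_def substochastic_0 substochastic_Astar_at)
  have "Xs n \<le> Xs (Suc n)" for n
  proof (induction n)
    case 0 then show ?case using sub[of 1] by (simp add: Xs_def substochastic_def nonneg_mat_def less_eq_vec_def)
  next
    case (Suc n) then show ?case using Astar_at_mono[OF sub[of n] sub[of "Suc n"]] by (simp add: Xs_def)
  qed
  then have inc: "incseq (\<lambda>n. Xs n $ i $ j)" for i j
    by (intro incseq_SucI) (simp add: less_eq_vec_def)
  define L where "L = (\<chi> i j. SUP n. Xs n $ i $ j)"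
  have bdd: "bdd_above (range (\<lambda>n. Xs n $ i $ j))" for i j
    by (intro bdd_aboveI2[where M=1] substochastic_nth_le_1 sub)
  have lim: "(\<lambda>n. Xs n $ i $ j) \<longlonglongrightarrow> L $ i $ j" for i j
    unfolding L_def using LIMSEQ_incseq_SUP[OF bdd inc] by simp
  have L: "substochastic L" by (rule substochastic_limit[OF sub lim])
  have "(\<lambda>n. Xs (Suc n) $ i $ j) \<longlonglongrightarrow> Astar_at L $ i $ j" for i j
    using Astar_at_tendsto[OF sub L lim] by (simp add: Xs_def)
  moreover have "(\<lambda>n. Xs (Suc n) $ i $ j) \<longlonglongrightarrow> L $ i $ j" for i j
    using LIMSEQ_Suc[OF lim] .
  ultimately have "Astar_at L $ i $ j = L $ i $ j" for i j by (rule LIMSEQ_unique)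
  then have "Astar_at L = L" by (simp add: vec_eq_iff)
  then have "solves_G A L"
    using L summable_mult_substochastic[OF substochastic_mpow[OF L]]
    by (simp add: solves_G_def substochastic_def Astar_at_def)
  with L show ?thesis by blast
qed

lemma summable_row_sum_power:
  assumes "0 \<le> r" "ereal r < conv_radius A"
  shows "summable (\<lambda>n. row_sum (A n) i * r ^ n)"
proof -
  have "summable (\<lambda>n. norm (norm (A n) * r ^ n))"
    using abs_summable_in_conv_radius[of r "\<lambda>n. norm (A n)"] assms by simp
  then have "summable (\<lambda>n. CARD('m) * (norm (A n) * r ^ n))"
    using assms(1) by (intro summable_mult) simp
  moreover have "norm (row_sum (A n) i * r ^ n) \<le> CARD('m) * (norm (A n) * r ^ n)" for n
  proof -
    have "row_sum (A n) i \<le> (\<Sum>j\<in>(UNIV::'m set). norm (A n))"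
      unfolding row_sum_def by (intro sum_mono) (metis abs_le_D1 abs_matrix_nth_le_norm)
    then have "row_sum (A n) i * r ^ n \<le> (CARD('m) * norm (A n)) * r ^ n"
      using assms(1) by (intro mult_right_mono) simp_all
    moreover have "0 \<le> row_sum (A n) i"
      unfolding row_sum_def by (intro sum_nonneg A_nth_nonneg)
    ultimately show ?thesis using assms(1) by (simp add: mult.assoc)
  qed
  ultimately show ?thesis by (rule summable_comparison_test')
qed

lemma ztrans_summable_A:
  assumes "ereal (cmod z) < conv_radius A"
  shows "ztrans_summable A z"
  unfolding ztrans_summable_def
proof (intro allI)
  fix i j
  have bound: "norm (z ^ n * complex_of_real (A n $ i $ j)) \<le> row_sum (A n) i * cmod z ^ n" for n
  proof -
    have "norm (z ^ n * complex_of_real (A n $ i $ j)) = A n $ i $ j * cmod z ^ n"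
      by (simp add: norm_mult norm_power A_nth_nonneg mult.commute)
    also have "\<dots> \<le> row_sum (A n) i * cmod z ^ n"
      by (intro mult_right_mono nth_le_row_sum A_nonneg) simp
    finally show ?thesis .
  qed
  have "summable (\<lambda>n. row_sum (A n) i * cmod z ^ n)"
    by (rule summable_row_sum_power) (simp_all add: assms)
  with bound show "summable (\<lambda>k. z ^ k * complex_of_real (A k $ i $ j))"
    by (rule summable_comparison_test'[rotated])
qed

end

section \<open>The matrices \<open>G\<close> and \<open>U(k)\<close>\<close>

locale minimal_G_solution = stochastic_matrix_series A for A :: "nat \<Rightarrow> real^'m^'m" +
  fixes G :: "real^'m^'m"
  assumes minimal: "minimal_G A G"
begin

lemma G_solves: "solves_G A G"
  using minimal by (simp add: minimal_G_def)

lemma G_eq: "G = (\<Sum>k. A k ** mpow G k)"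
  using G_solves unfolding solves_G_def by (rule conjunct2[THEN conjunct2])

lemma substochastic_G: "substochastic G"
proof -
  obtain X where X: "substochastic X" "solves_G A X"
    using substochastic_solution_exists by blast
  then have "G $ i $ j \<le> X $ i $ j" for i j
    using minimal unfolding minimal_G_def by blast
  then have "G \<le> X" by (simp add: less_eq_vec_def)
  have "nonneg_mat G" using G_solves unfolding solves_G_def by (rule conjunct1)
  from this \<open>G \<le> X\<close> X(1) show ?thesis by (rule substochastic_le)
qed

abbreviation U where "U \<equiv> Umat A G"

lemma summable_A_shift_mult_mpow_nth: "summable (\<lambda>n. (A (n + k) ** mpow G n) $ i $ j)"
proof (rule summable_comparison_test')
  show "summable (\<lambda>n. row_sum (A (n + k)) i)"
    using summable_ignore_initial_segment[OF summable_row_sum] .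
  show "norm ((A (n + k) ** mpow G n) $ i $ j) \<le> row_sum (A (n + k)) i" for n
    using mult_substochastic_nth_bounds[OF substochastic_mpow[OF substochastic_G]] by simp
qed

lemma summable_A_shift_mult_mpow: "summable (\<lambda>n. A (n + k) ** mpow G n)"
  and suminf_A_shift_mult_mpow_nth:
    "(\<Sum>n. A (n + k) ** mpow G n) $ i $ j = (\<Sum>n. (A (n + k) ** mpow G n) $ i $ j)"
  using summable_matrixI[OF summable_A_shift_mult_mpow_nth] by auto

lemma suminf_A_shift_mult_mpow: "(\<Sum>n. A (n + k) ** mpow G n) = A k + U k ** G"
proof -
  have "(\<Sum>n. A (Suc n + k) ** mpow G (Suc n)) = (\<Sum>n. A (n + k) ** mpow G n) - A k"
    using suminf_split_head[OF summable_A_shift_mult_mpow] by simp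
  moreover have "(\<Sum>n. A (Suc n + k) ** mpow G (Suc n)) = U k ** G"
    unfolding Umat_def mpow_Suc_right matrix_mul_assoc
    using suminf_matrix_mult_right(2)[OF summable_A_shift_mult_mpow[of "Suc k"]] by simp
  ultimately show ?thesis by (simp add: algebra_simps)
qed

lemma U_nth: "U k $ i $ j = (\<Sum>n. (A (n + Suc k) ** mpow G n) $ i $ j)"
  unfolding Umat_def using suminf_A_shift_mult_mpow_nth[of "Suc k"] by simp

lemma U_nonneg: "0 \<le> U k $ i $ j"
  unfolding U_nth
  by (intro suminf_nonneg summable_A_shift_mult_mpow_nth mult_substochastic_nth_bounds
      substochastic_mpow substochastic_G)

lemma U_nth_le_tail: "U k $ i $ j \<le> (\<Sum>n. row_sum (A (n + k + 1)) i)"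
  unfolding U_nth
proof (rule suminf_le)
  show "(A (n + Suc k) ** mpow G n) $ i $ j \<le> row_sum (A (n + k + 1)) i" for n
    using mult_substochastic_nth_bounds(2)[OF substochastic_mpow[OF substochastic_G]] by simp
  show "summable (\<lambda>n. row_sum (A (n + k + 1)) i)"
    using summable_ignore_initial_segment[OF summable_row_sum, of "Suc k"] by simp
qed (rule summable_A_shift_mult_mpow_nth)

lemma U_Suc: "U k = A (Suc k) + U (Suc k) ** G"
  using suminf_A_shift_mult_mpow[of "Suc k"] by (simp add: Umat_def)

lemma G_eq_U0: "G = A 0 + U 0 ** G"
proof -
  have "(\<Sum>n. A n ** mpow G n) = A 0 + U 0 ** G"
    using suminf_A_shift_mult_mpow[of 0] by simp
  with G_eq show ?thesis by (rule trans)
qed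

definition Gpow_pred :: "nat \<Rightarrow> real^'m^'m" where
  "Gpow_pred k = (if k = 0 then 0 else mpow G (k - 1))"

lemma substochastic_Gpow_pred: "substochastic (Gpow_pred k)"
  by (simp add: Gpow_pred_def substochastic_0 substochastic_mpow substochastic_G)

lemma U0_eq: "U 0 = (\<Sum>m. A m ** Gpow_pred m)"
proof -
  have "(\<Sum>m. A (Suc m) ** Gpow_pred (Suc m)) = (\<Sum>m. A m ** Gpow_pred m) - A 0 ** Gpow_pred 0"
    by (rule suminf_split_head[OF summable_mult_substochastic[OF substochastic_Gpow_pred]])
  then show ?thesis by (simp add: Gpow_pred_def Umat_def)
qed

lemma mpow_G_Suc_eq: "mpow G (Suc n) = (\<Sum>m. A m ** Gpow_pred (Suc n + m))"
proof -
  have "Gpow_pred (Suc n + m) = mpow G m ** mpow G n" for m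
    by (simp add: Gpow_pred_def mpow_add[symmetric] add.commute)
  then have "(\<Sum>m. A m ** Gpow_pred (Suc n + m)) = (\<Sum>m. A m ** mpow G m ** mpow G n)"
    by (simp add: matrix_mul_assoc)
  also have "\<dots> = (\<Sum>m. A m ** mpow G m) ** mpow G n"
    by (rule suminf_matrix_mult_right(2)[OF summable_A_shift_mult_mpow[of 0], simplified])
  also have "\<dots> = mpow G (Suc n)"
    using G_eq[symmetric] by simp
  finally show ?thesis by simp
qed

lemma substochastic_U0: "substochastic (U 0)"
  using substochastic_suminf_mult[OF substochastic_Gpow_pred] U0_eq by simp

lemma stochastic_row_in_mpow_G_step:
  assumes U0: "\<And>c. c \<in> S \<Longrightarrow> stochastic_row_in S (U 0) c"
    and row: "stochastic_row_in S (mpow G n) c" and A: "0 < A m $ c $ c'"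
  shows "n + m \<noteq> 0" "stochastic_row_in S (mpow G (n + m - 1)) c'"
proof -
  have "stochastic_row_in S (\<Sum>m. A m ** Gpow_pred (n + m)) c"
  proof (cases n)
    case 0
    with row show ?thesis by (simp add: stochastic_row_in_mat_1 U0 U0_eq[symmetric])
  next
    case (Suc n')
    with row show ?thesis by (simp only: mpow_G_Suc_eq)
  qed
  then have row': "stochastic_row_in S (Gpow_pred (n + m)) c'"
    by (rule stochastic_row_in_propagate[OF substochastic_Gpow_pred _ A])
  show "n + m \<noteq> 0"
  proof
    assume "n + m = 0"
    with row' show False by (simp add: Gpow_pred_def stochastic_row_in_def row_sum_def)
  qed
  then have "Gpow_pred (n + m) = mpow G (n + m - 1)"
    unfolding Gpow_pred_def by (rule if_not_P)
  with row' show "stochastic_row_in S (mpow G (n + m - 1)) c'" by simp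
qed

lemma U0_fixed_vector_eq_0:
  fixes B0 :: "real^'n^'n" and B :: "nat \<Rightarrow> real^'m^'n" and C0 :: "real^'n^'m"
    and v :: "real^'m"
  assumes T: "irreducible_T A B0 B C0" and v: "U 0 *v v = v"
  shows "v = 0"
proof (rule ccontr)
  assume "v \<noteq> 0"
  obtain i0 where max: "\<And>j. \<bar>v $ j\<bar> \<le> \<bar>v $ i0\<bar>"
    using obtain_max_finite_UNIV[of "\<lambda>j. \<bar>v $ j\<bar>"] by blast
  have "v $ i0 \<noteq> 0"
  proof
    assume "v $ i0 = 0"
    then have "v $ j = 0" for j using max[of j] by simp
    with \<open>v \<noteq> 0\<close> show False by (simp add: vec_eq_iff)
  qed
  define S where "S = {j. \<bar>v $ j\<bar> = \<bar>v $ i0\<bar>}"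
  have U0_rows: "stochastic_row_in S (U 0) c" if "c \<in> S" for c
    using stochastic_row_in_max_modulus[OF substochastic_U0 v, of c] max that \<open>v $ i0 \<noteq> 0\<close>
    by (simp add: S_def)
  text \<open>The rows of \<open>G\<close> record where the chain first enters the level below;
    started in a maximal coordinate two levels up, it never leaves the levels \<open>\<ge> 2\<close>.\<close>
  define Inv where "Inv s \<longleftrightarrow>
    (\<exists>l c. s = Inr (l, c) \<and> 2 \<le> l \<and> stochastic_row_in S (mpow G (l - 2)) c)"
    for s :: "'n + nat \<times> 'm"
  have Inv_step: "Inv t" if "Inv s" and pos: "0 < Tmat A B0 B C0 s t" for s t
  proof -
    obtain l c where s: "s = Inr (l, c)" "2 \<le> l" and row: "stochastic_row_in S (mpow G (l - 2)) c"
      using \<open>Inv s\<close> by (auto simp: Inv_def)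
    obtain l' c' where t: "t = Inr (l', c')" "l \<le> l' + 1" "0 < A (l' + 1 - l) $ c $ c'"
    proof (cases t)
      case (Inl x)
      with pos s show ?thesis by (simp add: Tmat_def)
    next
      case (Inr p)
      with pos s show ?thesis by (cases p) (auto simp: Tmat_def split: if_splits intro: that)
    qed
    note step = stochastic_row_in_mpow_G_step[OF U0_rows row t(3)]
    have "2 \<le> l'" and level: "l - 2 + (l' + 1 - l) - 1 = l' - 2"
      using step(1) s(2) t(2) by arith+
    with step(2) t(1) show ?thesis unfolding Inv_def level by blast
  qed
  let ?T = "{(u, w). valid_state u \<and> valid_state w \<and> 0 < Tmat A B0 B C0 u w}"
  have "(Inr (2, i0), Inl undefined) \<in> ?T\<^sup>*"
    using T unfolding irreducible_T_def by (simp add: valid_state_def)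
  then have "Inv (Inl undefined)"
  proof (induction rule: rtrancl_induct)
    case base
    show ?case by (simp add: Inv_def stochastic_row_in_mat_1 S_def)
  next
    case (step u w)
    then show ?case by (auto intro: Inv_step)
  qed
  then show False by (simp add: Inv_def)
qed

lemma invertible_mat_1_minus_U0:
  fixes B0 :: "real^'n^'n" and B :: "nat \<Rightarrow> real^'m^'n" and C0 :: "real^'n^'m"
  assumes "irreducible_T A B0 B C0"
  shows "invertible (mat 1 - U 0)"
  unfolding invertible_left_inverse matrix_left_invertible_ker
  using U0_fixed_vector_eq_0[OF assms] by (simp add: matrix_vector_mult_diff_rdistrib)

lemma ztrans_summable_U:
  assumes "1 \<le> cmod z" "ereal (cmod z) < conv_radius A"
  shows "ztrans_summable U z"
  unfolding ztrans_summable_def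
proof (intro allI)
  fix i j
  obtain R where R: "cmod z < R" "ereal R < conv_radius A"
    using ereal_dense2[OF assms(2)] by auto
  have tails: "summable (\<lambda>k. cmod z ^ k * (\<Sum>n. row_sum (A (n + k + 1)) i))"
    using R assms(1)
    by (intro summable_weighted_tails[where R=R] summable_row_sum_power)
       (simp_all add: row_sum_def sum_nonneg A_nth_nonneg)
  have "norm (z ^ k * complex_of_real (U k $ i $ j)) \<le> cmod z ^ k * (\<Sum>n. row_sum (A (n + k + 1)) i)" for k
    using U_nth_le_tail[of k i j] U_nonneg[of k i j]
    by (simp add: norm_mult norm_power mult_left_mono)
  then show "summable (\<lambda>k. z ^ k * complex_of_real (U k $ i $ j))"
    by (rule summable_comparison_test'[OF tails])
qed

lemma ztrans_U_mult_G:
  assumes A: "ztrans_summable A z" and U: "ztrans_summable U z" and z: "z \<noteq> 0"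
  shows "ztrans U z ** cmat G = cmat G + mat z ** ztrans U z - ztrans A z"
proof -
  have "ztrans U z ** cmat G = ztrans (\<lambda>k. U k ** G) z"
    by (rule ztrans_mult_right(2)[OF U, symmetric])
  also have "\<dots> = cmat (U 0 ** G) + mat z ** ztrans (\<lambda>k. U (Suc k) ** G) z"
    by (rule ztrans_Suc(2)[OF ztrans_mult_right(1)[OF U] z])
  also have "(\<lambda>k. U (Suc k) ** G) = (\<lambda>k. U k - A (Suc k))"
    using U_Suc by (metis add_diff_cancel_left')
  also have "ztrans (\<lambda>k. U k - A (Suc k)) z = ztrans U z - ztrans (\<lambda>k. A (Suc k)) z"
    by (rule ztrans_diff[OF U ztrans_Suc(1)[OF A z]])
  also have "U 0 ** G = G - A 0"
    using G_eq_U0 by (metis add_diff_cancel_left')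
  finally show ?thesis
    using ztrans_Suc(2)[OF A z] by (simp add: cmat_diff matrix_diff_ldistrib algebra_simps)
qed

lemma mat_1_minus_ztrans_U_mult:
  assumes "ztrans_summable A z" "ztrans_summable U z" "z \<noteq> 0"
  shows "(mat 1 - ztrans U z) ** (mat 1 - (\<chi> i j. complex_of_real (G $ i $ j) / z))
    = mat 1 - GammaAstar A z"
proof -
  let ?Gz = "(\<chi> i j. complex_of_real (G $ i $ j) / z) :: complex^'m^'m"
  have "(ztrans U z ** ?Gz) $ i $ j = (ztrans U z ** cmat G) $ i $ j / z" for i j
    by (simp add: matrix_mult_nth sum_divide_distrib del: ztrans_nth)
  also have "(ztrans U z ** cmat G) $ i $ j
      = complex_of_real (G $ i $ j) + z * ztrans U z $ i $ j - ztrans A z $ i $ j" for i j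
    by (simp add: ztrans_U_mult_G[OF assms] mat_mult_nth del: ztrans_nth)
  finally have entry: "(ztrans U z ** ?Gz) $ i $ j
      = (complex_of_real (G $ i $ j) + z * ztrans U z $ i $ j - ztrans A z $ i $ j) / z" for i j .
  have expand: "(mat 1 - ztrans U z) ** (mat 1 - ?Gz) = mat 1 - ?Gz - ztrans U z + ztrans U z ** ?Gz"
    by (simp add: matrix_diff_ldistrib matrix_diff_rdistrib)
  show ?thesis
    unfolding expand using assms(3)
    by (simp add: vec_eq_iff entry GammaAstar_def Astar_eq_ztrans field_simps del: ztrans_nth)
qed

lemma Rstar_eq:
  assumes "ztrans_summable U z"
  shows "Rstar A G z = (ztrans U z - cmat (U 0)) ** cmat (matrix_inv (mat 1 - U 0))"
proof -
  let ?Wi = "matrix_inv (mat 1 - U 0)"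
  have R: "Rmat A G = (\<lambda>k. U k ** ?Wi)" by (simp add: Rmat_def fun_eq_iff)
  have "Rstar A G z = ztrans (Rmat A G) z - cmat (Rmat A G 0)"
    unfolding Rstar_def R by (rule ztrans_shift[OF ztrans_mult_right(1)[OF assms]])
  also have "\<dots> = (ztrans U z - cmat (U 0)) ** cmat ?Wi"
    unfolding R ztrans_mult_right(2)[OF assms] by (simp add: cmat_mult matrix_diff_rdistrib)
  finally show ?thesis .
qed

lemma factorization:
  assumes W: "invertible (mat 1 - U 0)" and z: "1 \<le> cmod z" "ereal (cmod z) < conv_radius A"
  shows "mat 1 - GammaAstar A z
    = (mat 1 - Rstar A G z) ** cmat (mat 1 - U 0) ** (mat 1 - (\<chi> i j. complex_of_real (G $ i $ j) / z))"
proof -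
  have A: "ztrans_summable A z" using ztrans_summable_A z(2) by blast
  have U: "ztrans_summable U z" using ztrans_summable_U[OF z] .
  have "z \<noteq> 0" using z(1) by auto
  have "cmat (matrix_inv (mat 1 - U 0)) ** cmat (mat 1 - U 0) = mat 1"
    using matrix_inv_mult_left[OF W] by (simp add: cmat_mult[symmetric] cmat_mat_1)
  then have "(mat 1 - Rstar A G z) ** cmat (mat 1 - U 0) = mat 1 - ztrans U z"
    by (simp add: Rstar_eq[OF U] matrix_diff_rdistrib cmat_diff cmat_mat_1 matrix_mul_assoc[symmetric])
  then show ?thesis
    using mat_1_minus_ztrans_U_mult[OF A U \<open>z \<noteq> 0\<close>] by simp
qed

end

theorem proposition2p3:
  fixes A :: "nat \<Rightarrow> real^'m^'m"
    and B0 :: "real^'n^'n"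
    and B :: "nat \<Rightarrow> real^'m^'n"
    and C0 :: "real^'n^'m"
    and G :: "real^'m^'m"
    and z :: complex
  assumes A_nonneg: "\<And>k. nonneg_mat (A k)"
    and B0_nonneg: "nonneg_mat B0"
    and B_nonneg: "\<And>k. 1 \<le> k \<Longrightarrow> nonneg_mat (B k)"
    and C0_nonneg: "nonneg_mat C0"
    and A_summable: "summable A"
    and A_stochastic: "\<And>i. (\<Sum>j\<in>UNIV. (\<Sum>k. A k) $ i $ j) = 1"
    and B_summable: "summable (\<lambda>k. B (Suc k))"
    and B_rows: "\<And>i. (\<Sum>j\<in>UNIV. B0 $ i $ j) + (\<Sum>j\<in>UNIV. (\<Sum>k. B (Suc k)) $ i $ j) = 1"
    and C0_rows: "\<And>j. (\<Sum>i\<in>UNIV. C0 $ j $ i) = (\<Sum>j'\<in>UNIV. A 0 $ j $ j')"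
    and T_irred: "irreducible_T A B0 B C0"
    and A_irred: "irreducible_mat (\<Sum>k. A k)"
    and rA: "conv_radius A > 1"
    and G_def: "minimal_G A G"
    and z_low: "1 < cmod z"
    and z_high: "ereal (cmod z) < conv_radius A"
  shows "det (mat 1 - GammaAstar A z) = 0 \<longleftrightarrow> det (mat 1 - Rstar A G z) = 0"
proof -
  interpret minimal_G_solution A G
    using A_nonneg A_summable A_stochastic G_def by unfold_locales
  have W: "invertible (mat 1 - Umat A G 0)"
    by (rule invertible_mat_1_minus_U0[OF T_irred])
  have "det (mat 1 - GammaAstar A z) = det (mat 1 - Rstar A G z) * det (cmat (mat 1 - Umat A G 0))
      * det (mat 1 - (\<chi> i j. complex_of_real (G $ i $ j) / z))"
    using z_low by (simp add: factorization[OF W _ z_high] det_mul)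
  moreover have "det (cmat (mat 1 - Umat A G 0)) \<noteq> 0"
    using invertible_cmat[OF W] by (simp add: invertible_det_nz)
  moreover have "det (mat 1 - (\<chi> i j. complex_of_real (G $ i $ j) / z)) \<noteq> 0"
    by (rule det_mat_1_minus_substochastic_div[OF substochastic_G z_low])
  ultimately show ?thesis by simp
qed

end
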